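(* For all integers $n\geq 1$, \[p^{ed}_{od}(n)-p^{ed}_{od}(n-1)=2D_e(n-1)-D_o(n-1),\] and consequently \[p^{ed}_{od}(n)-p^{ed}_{od}(n-1)\equiv D_o(n-1)\pmod 2.\]
   Context: $\mathcal{P}^{ed}_{od}$ is the set of integer partitions such that: - all parts are distinct; - every odd part is smaller than every even part; - at least one odd part appears. In particular the empty partition is not in $\mathcal{P}^{ed}_{od}$. For $n\ge 0$: - $p^{ed}_{od}(n)$ is the number of partitions of $n$ in $\mathcal{P}^{ed}_{od}$, so $p^{ed}_{od}(0)=0$. - $D_e(n)$ is the number of partitions of $n$ into distinct even parts, with any number of parts including zero, so $D_e(0)=1$. - $D_o(n)$ is the number of partitions of $n$ into distinct odd parts, with $D_o(0)=1$. *)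

theory Defs
  imports Main "HOL-Number_Theory.Cong"
begin

(* A partition into distinct parts is represented by its (finite) set of parts,
   all positive; the partitioned integer is the sum of the parts. *)
definition distinct_partitions :: "nat \<Rightarrow> nat set set" where
  "distinct_partitions n = {P. finite P \<and> 0 \<notin> P \<and> \<Sum>P = n}"

definition p_ed_od :: "nat \<Rightarrow> nat" where
  "p_ed_od n = card {P \<in> distinct_partitions n.
      (\<forall>a\<in>P. \<forall>b\<in>P. odd a \<longrightarrow> even b \<longrightarrow> a < b) \<and> (\<exists>a\<in>P. odd a)}"

definition D_e :: "nat \<Rightarrow> nat" where
  "D_e n = card {P \<in> distinct_partitions n. \<forall>a\<in>P. even a}"

definition D_o :: "nat \<Rightarrow> nat" where
  "D_o n = card {P \<in> distinct_partitions n. \<forall>a\<in>P. odd a}"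

end

theory Submission
  imports Defs
begin

text \<open>
  Classify the partitions counted by \<open>p_ed_od n\<close> by their largest odd part \<open>c\<close>.
  Removing \<open>c\<close> leaves a distinct partition of \<open>n - c\<close> whose parts are odd and
  below \<open>c\<close> or even and above \<open>c\<close>. For odd \<open>c\<close>, the allowed parts together with
  \<open>c\<close> are the same as the allowed parts for \<open>c + 2\<close> together with \<open>c + 1\<close>, so
  splitting partitions with these parts according to whether they contain \<open>c\<close>
  or \<open>c + 1\<close> gives a recurrence that telescopes in \<open>c\<close>. The two ends of the
  telescope are \<open>c = 1\<close>, which gives partitions into even parts, and \<open>c > n\<close>,
  which gives partitions into odd parts.
\<close>

lemma part_le_sum: "P \<in> distinct_partitions n \<Longrightarrow> a \<in> P \<Longrightarrow> a \<le> n"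
  unfolding distinct_partitions_def using member_le_sum[of a P id] by auto

lemma finite_distinct_partitions: "finite (distinct_partitions n)"
proof (rule finite_subset)
  show "distinct_partitions n \<subseteq> Pow {1..n}"
  proof
    fix P assume "P \<in> distinct_partitions n"
    then have "a \<in> {1..n}" if "a \<in> P" for a
      using that part_le_sum[of P n a] by (auto simp: distinct_partitions_def Suc_le_eq intro: gr0I)
    then show "P \<in> Pow {1..n}" by blast
  qed
qed simp

definition distinct_partitions_in :: "nat set \<Rightarrow> nat \<Rightarrow> nat set set" where
  "distinct_partitions_in A n = {P \<in> distinct_partitions n. P \<subseteq> A}"

lemma finite_distinct_partitions_in: "finite (distinct_partitions_in A n)"
  unfolding distinct_partitions_in_def by (rule finite_subset[OF _ finite_distinct_partitions]) blast

lemma distinct_partitions_in_cong: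
  assumes "\<And>a. 0 < a \<Longrightarrow> a \<le> n \<Longrightarrow> a \<in> A \<longleftrightarrow> a \<in> B"
  shows "distinct_partitions_in A n = distinct_partitions_in B n"
proof -
  have "a \<in> A \<longleftrightarrow> a \<in> B" if "P \<in> distinct_partitions n" "a \<in> P" for P a
  proof (rule assms)
    show "0 < a" using that by (auto simp: distinct_partitions_def intro: gr0I)
    show "a \<le> n" using part_le_sum[OF that] .
  qed
  then show ?thesis unfolding distinct_partitions_in_def by blast
qed

lemma distinct_partitions_in_insert_containing:
  assumes "a \<notin> A" "0 < a" "a \<le> n"
  shows "{P \<in> distinct_partitions_in (insert a A) n. a \<in> P} = insert a ` distinct_partitions_in A (n - a)"
proof (intro equalityI subsetI)
  fix P assume "P \<in> {P \<in> distinct_partitions_in (insert a A) n. a \<in> P}"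
  then have P: "finite P" "0 \<notin> P" "\<Sum>P = n" "P \<subseteq> insert a A" "a \<in> P"
    by (auto simp: distinct_partitions_in_def distinct_partitions_def)
  then have "P - {a} \<in> distinct_partitions_in A (n - a)"
    using sum_diff1_nat[of id P a]
    by (auto simp: distinct_partitions_in_def distinct_partitions_def)
  moreover have "P = insert a (P - {a})" using P by auto
  ultimately show "P \<in> insert a ` distinct_partitions_in A (n - a)" by blast
next
  fix P assume "P \<in> insert a ` distinct_partitions_in A (n - a)"
  then obtain Q where Q: "Q \<in> distinct_partitions_in A (n - a)" "P = insert a Q" by auto
  then have "a \<notin> Q" using assms by (auto simp: distinct_partitions_in_def)
  then show "P \<in> {P \<in> distinct_partitions_in (insert a A) n. a \<in> P}"
    using Q assms by (auto simp: distinct_partitions_in_def distinct_partitions_def)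
qed

lemma card_distinct_partitions_in_containing:
  assumes "a \<notin> A" "0 < a"
  shows "card {P \<in> distinct_partitions_in (insert a A) n. a \<in> P}
           = (if a \<le> n then card (distinct_partitions_in A (n - a)) else 0)"
proof (cases "a \<le> n")
  case True
  have "inj_on (insert a) (distinct_partitions_in A (n - a))"
  proof (rule inj_onI)
    fix P Q assume "P \<in> distinct_partitions_in A (n - a)" "Q \<in> distinct_partitions_in A (n - a)"
      and "insert a P = insert a Q"
    moreover have "a \<notin> P" "a \<notin> Q"
      using assms(1) calculation(1,2) by (auto simp: distinct_partitions_in_def)
    ultimately show "P = Q" by (metis insert_ident)
  qed
  then show ?thesis
    using True distinct_partitions_in_insert_containing[OF assms True] by (simp add: card_image)
next
  case False
  then have "{P \<in> distinct_partitions_in (insert a A) n. a \<in> P} = {}"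
    using part_le_sum by (auto simp: distinct_partitions_in_def)
  then show ?thesis using False by (simp only: card.empty if_False)
qed

lemma card_distinct_partitions_in_insert:
  assumes "a \<notin> A"
  shows "card (distinct_partitions_in (insert a A) n)
           = card (distinct_partitions_in A n) + card {P \<in> distinct_partitions_in (insert a A) n. a \<in> P}"
    (is "card ?B = card ?A + card ?C")
proof -
  have "?B = ?A \<union> ?C"
    by (auto simp: distinct_partitions_in_def)
  then have "card ?B = card (?A \<union> ?C)" by (rule arg_cong)
  also have "\<dots> = card ?A + card ?C"
  proof (rule card_Un_disjoint)
    show "finite ?C" by (rule finite_subset[OF _ finite_distinct_partitions_in]) blast
    show "?A \<inter> ?C = {}" using assms by (auto simp: distinct_partitions_in_def)
  qed (rule finite_distinct_partitions_in)
  finally show ?thesis .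
qed

definition odd_below_even_above :: "nat \<Rightarrow> nat set" where
  "odd_below_even_above c = {a. odd a \<and> a < c} \<union> {a. even a \<and> c < a}"

lemma mem_insert_odd_below_even_above:
  assumes "odd c"
  shows "a \<in> insert c (odd_below_even_above c) \<longleftrightarrow> (odd a \<longrightarrow> a \<le> c) \<and> (even a \<longrightarrow> c < a)"
  using assms by (auto simp: odd_below_even_above_def)

lemma insert_odd_below_even_above_shift:
  assumes "odd c"
  shows "insert c (odd_below_even_above c) = insert (c + 1) (odd_below_even_above (c + 2))"
  using assms by (auto simp: odd_below_even_above_def) presburger+

definition D_split :: "nat \<Rightarrow> nat \<Rightarrow> nat" where
  "D_split c n = card (distinct_partitions_in (odd_below_even_above c) n)"

text \<open>For odd \<open>c\<close>, \<open>p_ed_od_top c n\<close> counts the partitions in \<open>p_ed_od n\<close> with largest odd part \<open>c\<close>.\<close>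

definition p_ed_od_top :: "nat \<Rightarrow> nat \<Rightarrow> nat" where
  "p_ed_od_top c n = card {P \<in> distinct_partitions_in (insert c (odd_below_even_above c)) n. c \<in> P}"

lemma p_ed_od_top_eq:
  assumes "0 < c"
  shows "p_ed_od_top c n = (if c \<le> n then D_split c (n - c) else 0)"
  unfolding p_ed_od_top_def D_split_def
  by (rule card_distinct_partitions_in_containing) (auto simp: odd_below_even_above_def assms)

lemma D_split_recurrence:
  assumes "odd c"
  shows "D_split c n + p_ed_od_top c n = D_split (c + 2) n + p_ed_od_top (c + 2) (n + 1)"
proof -
  have notin: "c \<notin> odd_below_even_above c" "c + 1 \<notin> odd_below_even_above (c + 2)"
    using assms by (auto simp: odd_below_even_above_def)
  have "D_split c n + p_ed_od_top c n = card (distinct_partitions_in (insert c (odd_below_even_above c)) n)"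
    using card_distinct_partitions_in_insert[OF notin(1)] by (simp add: D_split_def p_ed_od_top_def)
  also have "\<dots> = card (distinct_partitions_in (insert (c + 1) (odd_below_even_above (c + 2))) n)"
    using insert_odd_below_even_above_shift[OF assms] by simp
  also have "\<dots> = D_split (c + 2) n + p_ed_od_top (c + 2) (n + 1)"
  proof -
    have "p_ed_od_top (c + 2) (n + 1)
            = card {P \<in> distinct_partitions_in (insert (c + 1) (odd_below_even_above (c + 2))) n. c + 1 \<in> P}"
      using card_distinct_partitions_in_containing[OF notin(2)] p_ed_od_top_eq[of "c + 2" "n + 1"]
      by (simp add: D_split_def)
    then show ?thesis
      using card_distinct_partitions_in_insert[OF notin(2)] by (simp add: D_split_def)
  qed
  finally show ?thesis .
qed

lemma D_split_telescope:
  "(\<Sum>k<N. p_ed_od_top (2 * k + 1) n) + D_split 1 n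
     = D_split (2 * N + 1) n + (\<Sum>k<N. p_ed_od_top (2 * k + 3) (n + 1))"
proof (induction N)
  case (Suc N)
  have "D_split (2 * N + 1) n + p_ed_od_top (2 * N + 1) n
          = D_split (2 * N + 3) n + p_ed_od_top (2 * N + 3) (n + 1)"
    using D_split_recurrence[of "2 * N + 1" n] by (simp add: numeral_3_eq_3)
  with Suc show ?case by (simp add: numeral_3_eq_3)
qed simp

lemma D_split_1_eq_D_e: "D_split 1 n = D_e n"
proof -
  have "distinct_partitions_in (odd_below_even_above 1) n = distinct_partitions_in {a. even a} n"
    by (rule distinct_partitions_in_cong) (auto simp: odd_below_even_above_def)
  then show ?thesis
    by (simp add: D_split_def D_e_def distinct_partitions_in_def subset_eq)
qed

lemma D_split_eq_D_o:
  assumes "n < c"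
  shows "D_split c n = D_o n"
proof -
  have "distinct_partitions_in (odd_below_even_above c) n = distinct_partitions_in {a. odd a} n"
    by (rule distinct_partitions_in_cong) (use assms in \<open>auto simp: odd_below_even_above_def\<close>)
  then show ?thesis
    by (simp add: D_split_def D_o_def distinct_partitions_in_def subset_eq)
qed

lemma ed_od_partitions_by_largest_odd_part:
  assumes "n \<le> 2 * N"
  shows "{P \<in> distinct_partitions n. (\<forall>a\<in>P. \<forall>b\<in>P. odd a \<longrightarrow> even b \<longrightarrow> a < b) \<and> (\<exists>a\<in>P. odd a)}
           = (\<Union>k<N. {P \<in> distinct_partitions_in (insert (2 * k + 1) (odd_below_even_above (2 * k + 1))) n.
                         2 * k + 1 \<in> P})"
    (is "?L = (\<Union>k<N. ?T k)")
proof (intro equalityI subsetI)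
  fix P assume "P \<in> ?L"
  then have P: "P \<in> distinct_partitions n" and ordered: "\<forall>a\<in>P. \<forall>b\<in>P. odd a \<longrightarrow> even b \<longrightarrow> a < b"
    and "\<exists>a\<in>P. odd a" by auto
  define c where "c = Max {a \<in> P. odd a}"
  have fin: "finite {a \<in> P. odd a}" using P by (simp add: distinct_partitions_def)
  have "c \<in> P" "odd c" using fin \<open>\<exists>a\<in>P. odd a\<close> Max_in[of "{a \<in> P. odd a}"] by (auto simp: c_def)
  have "P \<subseteq> insert c (odd_below_even_above c)"
  proof
    fix a assume "a \<in> P"
    moreover have "odd a \<Longrightarrow> a \<le> c" using fin \<open>a \<in> P\<close> by (simp add: c_def)
    ultimately show "a \<in> insert c (odd_below_even_above c)"
      unfolding mem_insert_odd_below_even_above[OF \<open>odd c\<close>] using ordered \<open>c \<in> P\<close> \<open>odd c\<close> by blast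
  qed
  moreover obtain k where "c = 2 * k + 1" using \<open>odd c\<close> oddE by blast
  moreover have "k < N" using part_le_sum[OF P \<open>c \<in> P\<close>] assms calculation(2) by linarith
  ultimately show "P \<in> (\<Union>k<N. ?T k)"
    using P \<open>c \<in> P\<close> by (auto simp: distinct_partitions_in_def)
next
  fix P assume "P \<in> (\<Union>k<N. ?T k)"
  then obtain k where "2 * k + 1 \<in> P" and P: "P \<in> distinct_partitions n"
    and sub: "P \<subseteq> insert (2 * k + 1) (odd_below_even_above (2 * k + 1))"
    by (auto simp: distinct_partitions_in_def)
  have bounds: "odd a \<Longrightarrow> a \<le> 2 * k + 1" "even a \<Longrightarrow> 2 * k + 1 < a" if "a \<in> P" for a
    using subsetD[OF sub that] mem_insert_odd_below_even_above[of "2 * k + 1" a] by simp_all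
  have "\<forall>a\<in>P. \<forall>b\<in>P. odd a \<longrightarrow> even b \<longrightarrow> a < b"
    using bounds le_less_trans by blast
  moreover have "\<exists>a\<in>P. odd a" using \<open>2 * k + 1 \<in> P\<close> by (intro bexI) simp_all
  ultimately show "P \<in> ?L" using P by blast
qed

lemma p_ed_od_eq_sum_top:
  assumes "n \<le> 2 * N"
  shows "p_ed_od n = (\<Sum>k<N. p_ed_od_top (2 * k + 1) n)"
proof -
  have "i = j" if "P \<in> distinct_partitions_in (insert (2 * i + 1) (odd_below_even_above (2 * i + 1))) n"
    "P \<in> distinct_partitions_in (insert (2 * j + 1) (odd_below_even_above (2 * j + 1))) n"
    "2 * i + 1 \<in> P" "2 * j + 1 \<in> P" for i j P
    using that mem_insert_odd_below_even_above[of "2 * i + 1" "2 * j + 1"]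
      mem_insert_odd_below_even_above[of "2 * j + 1" "2 * i + 1"]
    by (auto simp: distinct_partitions_in_def)
  then show ?thesis
    unfolding p_ed_od_def ed_od_partitions_by_largest_odd_part[OF assms] p_ed_od_top_def
    by (subst card_UN_disjoint) (auto simp: finite_distinct_partitions_in)
qed

theorem mainTheorem5:
  fixes n :: nat
  assumes "n \<ge> 1"
  shows "int (p_ed_od n) - int (p_ed_od (n - 1)) = 2 * int (D_e (n - 1)) - int (D_o (n - 1))
         \<and> [int (p_ed_od n) - int (p_ed_od (n - 1)) = int (D_o (n - 1))] (mod 2)"
proof -
  obtain m where n: "n = m + 1" using assms by (cases n) auto
  have "p_ed_od m = (\<Sum>k<m. p_ed_od_top (2 * k + 1) m)"
    by (rule p_ed_od_eq_sum_top) simp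
  moreover have "p_ed_od (m + 1) = p_ed_od_top 1 (m + 1) + (\<Sum>k<m. p_ed_od_top (2 * k + 3) (m + 1))"
  proof -
    have "p_ed_od (m + 1) = (\<Sum>k<Suc m. p_ed_od_top (2 * k + 1) (m + 1))"
      by (rule p_ed_od_eq_sum_top) simp
    then show ?thesis by (subst (asm) sum.lessThan_Suc_shift) (simp add: numeral_3_eq_3)
  qed
  moreover have "p_ed_od_top 1 (m + 1) = D_e m"
    using D_split_1_eq_D_e[of m] by (simp add: p_ed_od_top_eq)
  moreover have "D_split (2 * m + 1) m = D_o m"
    by (simp add: D_split_eq_D_o)
  ultimately have "p_ed_od (m + 1) + D_o m = p_ed_od m + 2 * D_e m"
    using D_split_telescope[of m m] D_split_1_eq_D_e[of m] by simp
  then have "int (p_ed_od n) - int (p_ed_od (n - 1)) = 2 * int (D_e (n - 1)) - int (D_o (n - 1))"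
    using n by simp
  moreover have "[2 * int (D_e (n - 1)) - int (D_o (n - 1)) = int (D_o (n - 1))] (mod 2)"
    by (simp add: cong_iff_dvd_diff)
  ultimately show ?thesis by simp
qed

end
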